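(* Let $P,P',P'',Q,S$ be programs and $B$ a Boolean expression such that $P'\equiv_B(P,B)$ and $P''\equiv_B(P,\neg B)$. If the operational triple $\{|P'|\}\ S\ \{|Q|\}$ holds and $P''\sqsubseteq Q$, then $\{|P|\}\ \mathbf{if}\ B\ \mathbf{then}\ S\ \mathbf{fi}\ \{|Q|\}$ holds.
   Context: Programs are statements of a sequential imperative language with a standard small-step operational semantics over program states. $\mathrm{behs}(P)$ is the set of pairs (initial state, final state) of finite terminating executions of $P$; $(s,u)\in\mathrm{behs}(P;Q)$ iff there is $t$ with $(s,t)\in\mathrm{behs}(P)$ and $(t,u)\in\mathrm{behs}(Q)$. For a state $s$ and Boolean expression $B$, $s(B)\in\{\mathit{tt},\mathit{ff}\}$ is the (side-effect-free) value of $B$ in $s$. The statement $\mathbf{if}\ B\ \mathbf{then}\ S\ \mathbf{fi}$ started in state $s$ executes $S$ from $s$ if $s(B)=\mathit{tt}$ and otherwise terminates in $s$ without changing the state. The post-state set is $\mathrm{pst}(P)=\{t:\exists s,\ (s,t)\in\mathrm{behs}(P)\}$. Program ordering: $P\sqsubseteq Q$ iff $\mathrm{pst}(P)\subseteq\mathrm{pst}(Q)$. The operational triple $\{|P|\}\ S\ \{|Q|\}$ means $\mathrm{pst}(P;S)\subseteq\mathrm{pst}(Q)$. For programs $P',P$ and Boolean expression $B$, $P'\equiv_B(P,B)$ means $\mathrm{pst}(P')=\mathrm{pst}(P)\cap\{s : s(B)=\mathit{tt}\}$. *)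

theory Defs
  imports Main
begin

type_synonym 's bexp = "'s \<Rightarrow> bool"

datatype 's com =
    Skip
  | Basic "('s \<times> 's) set"
  | Seq "'s com" "'s com"        (infixr ";;" 60)
  | IfThenElse "'s bexp" "'s com" "'s com"
  | IfThen "'s bexp" "'s com"
  | While "'s bexp" "'s com"

inductive small_step :: "'s com \<times> 's \<Rightarrow> 's com \<times> 's \<Rightarrow> bool" (infix "\<rightarrow>" 55) where
  Basic: "(s, t) \<in> R \<Longrightarrow> (Basic R, s) \<rightarrow> (Skip, t)"
| Seq1: "(Skip ;; c2, s) \<rightarrow> (c2, s)"
| Seq2: "(c1, s) \<rightarrow> (c1', s') \<Longrightarrow> (c1 ;; c2, s) \<rightarrow> (c1' ;; c2, s')"
| IfTrue: "b s \<Longrightarrow> (IfThenElse b c1 c2, s) \<rightarrow> (c1, s)"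
| IfFalse: "\<not> b s \<Longrightarrow> (IfThenElse b c1 c2, s) \<rightarrow> (c2, s)"
| IfThenTrue: "b s \<Longrightarrow> (IfThen b c, s) \<rightarrow> (c, s)"
| IfThenFalse: "\<not> b s \<Longrightarrow> (IfThen b c, s) \<rightarrow> (Skip, s)"
| While: "(While b c, s) \<rightarrow> (IfThenElse b (c ;; While b c) Skip, s)"

definition behs :: "'s com \<Rightarrow> ('s \<times> 's) set" where
  "behs P = {(s, t). small_step\<^sup>*\<^sup>* (P, s) (Skip, t)}"

definition pst :: "'s com \<Rightarrow> 's set" where
  "pst P = {t. \<exists>s. (s, t) \<in> behs P}"

definition prog_le :: "'s com \<Rightarrow> 's com \<Rightarrow> bool" (infix "\<sqsubseteq>" 50) where
  "P \<sqsubseteq> Q \<longleftrightarrow> pst P \<subseteq> pst Q"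

definition op_triple :: "'s com \<Rightarrow> 's com \<Rightarrow> 's com \<Rightarrow> bool" where
  "op_triple P S Q \<longleftrightarrow> pst (P ;; S) \<subseteq> pst Q"

definition restrict_equiv :: "'s com \<Rightarrow> 's com \<Rightarrow> 's bexp \<Rightarrow> bool" where
  "restrict_equiv P' P B \<longleftrightarrow> pst P' = pst P \<inter> {s. B s}"

end

theory Submission
  imports Defs
begin

text \<open>Sequential composition denotes relational composition, and \<open>IfThen B S\<close> denotes
  \<open>S\<close> restricted to \<open>B\<close>-states together with the identity on \<open>\<not> B\<close>-states. Hence the
  post-states of \<open>P ;; IfThen B S\<close> split into those of \<open>P' ;; S\<close> and those of \<open>P''\<close>.\<close>

inductive_cases Skip_stepE[elim!]: "(Skip, s) \<rightarrow> y"
inductive_cases Seq_stepE[consumes 1, case_names Seq1 Seq2]: "(c1 ;; c2, s) \<rightarrow> y"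
inductive_cases IfThen_stepE: "(IfThen b c, s) \<rightarrow> y"

lemma Skip_steps_to_Skip: "small_step\<^sup>*\<^sup>* (Skip, s) (Skip, u) \<Longrightarrow> u = s"
  by (erule converse_rtranclpE) auto

lemma Seq_steps_to_Skip:
  assumes "small_step\<^sup>*\<^sup>* (c1 ;; c2, s) (Skip, u)"
  shows "\<exists>t. small_step\<^sup>*\<^sup>* (c1, s) (Skip, t) \<and> small_step\<^sup>*\<^sup>* (c2, t) (Skip, u)"
  using assms
proof (induction "(c1 ;; c2, s)" arbitrary: c1 s rule: converse_rtranclp_induct)
  case (step z)
  from step.hyps(1) show ?case
  proof (cases rule: Seq_stepE)
    case Seq1
    then show ?thesis using step.hyps(2) by auto
  next
    case (Seq2 c1' s')
    with step.hyps(3) obtain t where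
      "small_step\<^sup>*\<^sup>* (c1', s') (Skip, t)" "small_step\<^sup>*\<^sup>* (c2, t) (Skip, u)"
      by blast
    with Seq2 show ?thesis by (meson converse_rtranclp_into_rtranclp)
  qed
qed

lemma Seq_steps_lift:
  "small_step\<^sup>*\<^sup>* (c1, s) (c1', s') \<Longrightarrow> small_step\<^sup>*\<^sup>* (c1 ;; c2, s) (c1' ;; c2, s')"
  by (induction rule: converse_rtranclp_induct2)
    (auto intro: Seq2 converse_rtranclp_into_rtranclp)

lemma behs_Seq: "behs (c1 ;; c2) = behs c1 O behs c2"
proof
  show "behs (c1 ;; c2) \<subseteq> behs c1 O behs c2"
    unfolding behs_def by (auto dest: Seq_steps_to_Skip)
next
  have "small_step\<^sup>*\<^sup>* (c1 ;; c2, s) (Skip, u)"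
    if "small_step\<^sup>*\<^sup>* (c1, s) (Skip, t)" "small_step\<^sup>*\<^sup>* (c2, t) (Skip, u)" for s t u
    using Seq_steps_lift[OF that(1), of c2] Seq1 that(2)
    by (meson converse_rtranclp_into_rtranclp rtranclp_trans)
  then show "behs c1 O behs c2 \<subseteq> behs (c1 ;; c2)"
    unfolding behs_def by auto
qed

lemma pst_Seq: "pst (c1 ;; c2) = behs c2 `` pst c1"
  unfolding pst_def behs_Seq by blast

lemma behs_IfThen:
  "behs (IfThen b c) = {(s, t) \<in> behs c. b s} \<union> {(s, s) | s. \<not> b s}"
proof -
  have "small_step\<^sup>*\<^sup>* (IfThen b c, s) (Skip, t) \<longleftrightarrow>
      b s \<and> small_step\<^sup>*\<^sup>* (c, s) (Skip, t) \<or> \<not> b s \<and> t = s" for s t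
  proof
    assume "small_step\<^sup>*\<^sup>* (IfThen b c, s) (Skip, t)"
    then show "b s \<and> small_step\<^sup>*\<^sup>* (c, s) (Skip, t) \<or> \<not> b s \<and> t = s"
      by (cases rule: converse_rtranclpE) (auto elim: IfThen_stepE dest: Skip_steps_to_Skip)
  qed (auto intro: IfThenTrue IfThenFalse converse_rtranclp_into_rtranclp)
  then show ?thesis
    unfolding behs_def by auto
qed

theorem theorem4:
  fixes P P' P'' Q S :: "'s com" and B :: "'s bexp"
  assumes "restrict_equiv P' P B"
    and "restrict_equiv P'' P (\<lambda>s. \<not> B s)"
    and "op_triple P' S Q"
    and "P'' \<sqsubseteq> Q"
  shows "op_triple P (IfThen B S) Q"
proof -
  have "pst (P ;; IfThen B S) = behs S `` (pst P \<inter> {s. B s}) \<union> (pst P \<inter> {s. \<not> B s})"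
    unfolding pst_Seq behs_IfThen by blast
  also have "\<dots> = pst (P' ;; S) \<union> pst P''"
    using assms(1,2) unfolding restrict_equiv_def pst_Seq by simp
  also have "\<dots> \<subseteq> pst Q"
    using assms(3,4) unfolding op_triple_def prog_le_def by blast
  finally show ?thesis
    unfolding op_triple_def .
qed

end
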